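(* Let $C\subseteq\mathbb{R}^n$ and $\bar x\in C$. If $C$ is amenable at $\bar x$, then $C$ is smoothly approximately convex at $\bar x$.
   Context: A curve $\gamma:[a,b]\to C$ is a smooth curve segment in $C$ if it extends to a $\mathcal{C}^{(1)}$-smooth map from an open neighborhood of $[a,b]$ into $\mathbb{R}^n$. A set $C\subseteq\mathbb{R}^n$ is smoothly approximately convex at $\bar x\in C$ if for every $\epsilon>0$ there is a neighborhood $W$ of $\bar x$ such that for all $x,x'\in C\cap W$ there is a smooth curve segment $\gamma:[0,1]\to C$ with $\gamma(0)=x$, $\gamma(1)=x'$ and $\|\gamma'(t)-(x'-x)\|\le\epsilon\|x'-x\|$ for all $t\in[0,1]$. A set $C\subseteq\mathbb{R}^n$ is amenable at $\bar x\in C$ if there exist an open neighborhood $V$ of $\bar x$, a $\mathcal{C}^{(1)}$ map $F:V\to\mathbb{R}^m$ and a closed convex set $D\subseteq\mathbb{R}^m$ such that $C\cap V=\{x\in V: F(x)\in D\}$ and the only vector $y\in N_D(F(\bar x))$ with $\nabla F(\bar x)^\top y=0$ is $y=0$; here $N_D(z)=\{y:\langle y,d-z\rangle\le 0\ \forall d\in D\}$ is the normal cone of the convex set $D$. *)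

theory Defs
  imports "HOL-Analysis.Analysis"
begin

definition smooth_curve_segment :: "'a::euclidean_space set \<Rightarrow> real \<Rightarrow> real \<Rightarrow> (real \<Rightarrow> 'a) \<Rightarrow> bool" where
  "smooth_curve_segment C a b \<gamma> \<longleftrightarrow>
     (\<forall>t\<in>{a..b}. \<gamma> t \<in> C) \<and>
     (\<exists>U g g'. open U \<and> {a..b} \<subseteq> U \<and>
        (\<forall>t\<in>U. (g has_vector_derivative g' t) (at t)) \<and> continuous_on U g' \<and>
        (\<forall>t\<in>{a..b}. g t = \<gamma> t))"

definition smoothly_approx_convex :: "'a::euclidean_space set \<Rightarrow> 'a \<Rightarrow> bool" where
  "smoothly_approx_convex C xbar \<longleftrightarrow>
     (\<forall>\<epsilon>>0. \<exists>W. open W \<and> xbar \<in> W \<and>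
        (\<forall>x\<in>C \<inter> W. \<forall>x'\<in>C \<inter> W. \<exists>\<gamma>. smooth_curve_segment C 0 1 \<gamma> \<and>
            \<gamma> 0 = x \<and> \<gamma> 1 = x' \<and>
            (\<forall>t\<in>{0..1}. norm (vector_derivative \<gamma> (at t within {0..1}) - (x' - x))
                            \<le> \<epsilon> * norm (x' - x))))"

definition normal_cone_cvx :: "'b::real_inner set \<Rightarrow> 'b \<Rightarrow> 'b set" where
  "normal_cone_cvx D z = {y. \<forall>d\<in>D. inner y (d - z) \<le> 0}"

definition amenable_via :: "'a::euclidean_space set \<Rightarrow> 'a \<Rightarrow> 'a set \<Rightarrow> ('a \<Rightarrow> 'b::euclidean_space)
     \<Rightarrow> 'b set \<Rightarrow> bool" where
  "amenable_via C xbar V F D \<longleftrightarrow>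
     open V \<and> xbar \<in> V \<and>
     (\<exists>F'. (\<forall>x\<in>V. (F has_derivative blinfun_apply (F' x)) (at x)) \<and> continuous_on V F' \<and>
        closed D \<and> convex D \<and> C \<inter> V = {x\<in>V. F x \<in> D} \<and>
        (\<forall>y\<in>normal_cone_cvx D (F xbar). adjoint (blinfun_apply (F' xbar)) y = 0 \<longrightarrow> y = 0))"

end

theory Submission
  imports Defs
begin

text \<open>For \<open>L = F' xbar\<close> the constraint qualification makes \<open>range L - cone (D - F xbar)\<close> the
  whole space. Decomposing the basis vectors gives linear maps \<open>M\<close>, \<open>J\<close> with \<open>L M - J = id\<close> and
  a vector \<open>c\<close> with \<open>F xbar + L c + J u \<in> D\<close> for all small \<open>u\<close>. By the inverse function
  theorem, \<open>F (z + M v) = a + J v\<close> has a \<open>C\<^sup>1\<close> solution \<open>v = \<sigma> (z, a)\<close> near \<open>(xbar, F xbar)\<close>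
  which vanishes on the graph of \<open>F\<close>. For \<open>x, x' \<in> C\<close> near \<open>xbar\<close> let \<open>(z t, a t)\<close> run from
  \<open>(x, F x)\<close> to \<open>(x', F x')\<close> along the segment bent towards \<open>(c, F xbar + L c)\<close> by the bump
  \<open>\<theta> t = \<rho> t (1 - t)\<close>, \<open>\<rho> = norm (x' - x)\<close>, and put \<open>\<gamma> t = z t + M (v t)\<close> with
  \<open>v t = \<sigma> (z t, a t)\<close>. The correction \<open>v\<close> vanishes at both ends and its derivative is small
  compared with \<open>\<rho>\<close>, so \<open>norm (v t)\<close> is small compared with \<open>\<theta> t\<close>. Hence
  \<open>F (\<gamma> t) = (1 - \<theta> t) ((1 - t) F x + t F x') + \<theta> t (F xbar + L c + J (v t / \<theta> t))\<close> lies in \<open>D\<close>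
  by convexity, so \<open>\<gamma>\<close> stays in \<open>C\<close>; and \<open>\<gamma>' - (x' - x) = \<theta>' c + M v'\<close> is small compared with
  \<open>\<rho>\<close> once \<open>c\<close> has been scaled down.\<close>

section \<open>Splittings from the constraint qualification\<close>

lemma convex_cone_halfspace_of_neq_UNIV:
  fixes K :: "'a::euclidean_space set"
  assumes K: "convex_cone K" and "K \<noteq> UNIV"
  obtains a where "a \<noteq> 0" "\<And>k. k \<in> K \<Longrightarrow> 0 \<le> a \<bullet> k"
proof -
  obtain w where w: "w \<notin> K" using \<open>K \<noteq> UNIV\<close> by blast
  have "convex ((\<lambda>k. k - w) ` K)" "0 \<notin> (\<lambda>k. k - w) ` K"
    using K w by (auto simp: convex_cone_def convex_translation_subtract)
  then obtain a where a: "a \<noteq> 0" and "\<forall>x \<in> (\<lambda>k. k - w) ` K. 0 \<le> a \<bullet> x"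
    using separating_hyperplane_set_0 by blast
  then have sep: "a \<bullet> w \<le> a \<bullet> k" if "k \<in> K" for k
    using that by (auto simp: inner_diff_right)
  have "0 \<le> a \<bullet> k" if k: "k \<in> K" for k
  proof (rule ccontr)
    assume neg: "\<not> 0 \<le> a \<bullet> k"
    define t where "t = (\<bar>a \<bullet> w\<bar> + 1) / - (a \<bullet> k)"
    have "t \<ge> 0" using neg unfolding t_def by (intro divide_nonneg_pos) auto
    then have "a \<bullet> w \<le> t * (a \<bullet> k)" using sep convex_cone_scaleR[OF K _ k] by force
    moreover have "t * (a \<bullet> k) = - (\<bar>a \<bullet> w\<bar> + 1)" using neg by (simp add: t_def)
    ultimately show False by linarith
  qed
  with a that show ?thesis by blast
qed

lemma normal_cone_qualification_decomposition:
  fixes L :: "'a::euclidean_space \<Rightarrow> 'b::euclidean_space"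
  assumes L: "linear L" and "convex D" and "Fb \<in> D"
    and qual: "\<forall>y\<in>normal_cone_cvx D Fb. adjoint L y = 0 \<longrightarrow> y = 0"
  obtains h s d where "0 \<le> s" "d \<in> D" "w = L h - s *\<^sub>R (d - Fb)"
proof -
  define T where "T = conic hull ((\<lambda>d. d - Fb) ` D)"
  define K where "K = (\<lambda>(h, q). L h - q) ` (UNIV \<times> T)"
  have "convex_cone T"
    unfolding convex_cone_def T_def using assms(2,3)
    by (auto intro!: convex_conic_hull convex_translation_subtract hull_inc simp: conic_conic_hull)
  moreover have "convex_cone (UNIV :: 'a set)" by (simp add: convex_cone_def conic_UNIV)
  moreover have "linear (\<lambda>(h, q). L h - q)"
    using L by (auto simp: linear_iff algebra_simps)
  ultimately have cone: "convex_cone K"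
    unfolding K_def using convex_cone_linear_image convex_cone_Times by blast
  have "K = UNIV"
  proof (rule ccontr)
    assume "K \<noteq> UNIV"
    then obtain a where "a \<noteq> 0" and a: "\<And>k. k \<in> K \<Longrightarrow> 0 \<le> a \<bullet> k"
      using convex_cone_halfspace_of_neq_UNIV[OF cone] by blast
    have "0 \<in> T" using \<open>convex_cone T\<close> convex_cone_contains_0 by blast
    then have "0 \<le> a \<bullet> L h" for h using a[of "L h"] by (force simp: K_def)
    then have "a \<bullet> L h = 0" for h using linear_neg[OF L, of h] by (smt (verit) inner_minus_right)
    then have "adjoint L a = 0"
      by (metis adjoint_works[OF L] inner_commute inner_eq_zero_iff)
    moreover have "a \<in> normal_cone_cvx D Fb"
    proof -
      have "d - Fb \<in> T" if "d \<in> D" for d using that by (auto simp: T_def intro: hull_inc)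
      then have "0 \<le> a \<bullet> (L 0 - (d - Fb))" if "d \<in> D" for d using a that by (force simp: K_def)
      then show ?thesis by (simp add: normal_cone_cvx_def linear_0[OF L] inner_diff_right)
    qed
    ultimately show False using qual \<open>a \<noteq> 0\<close> by blast
  qed
  then obtain h q where "q \<in> T" "w = L h - q" by (force simp: K_def)
  with that show ?thesis by (auto simp: T_def conic_hull_explicit)
qed

lemma convex_subconvex_combination_mem:
  fixes D :: "'b::real_vector set"
  assumes "convex D" "Fb \<in> D" "finite I"
    and "\<And>i. i \<in> I \<Longrightarrow> 0 \<le> c i" "sum c I \<le> 1" "\<And>i. i \<in> I \<Longrightarrow> e i \<in> D"
  shows "Fb + (\<Sum>i\<in>I. c i *\<^sub>R (e i - Fb)) \<in> D"
proof (cases "sum c I = 0")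
  case True
  then show ?thesis using assms by (simp add: sum_nonneg_eq_0_iff)
next
  case False
  define T where "T = sum c I"
  have "T > 0" using False assms(4) sum_nonneg[of I c] by (force simp: T_def)
  have "(\<Sum>i\<in>I. (c i / T) *\<^sub>R e i) \<in> D"
    using \<open>T > 0\<close> assms by (intro convex_sum) (auto simp: T_def sum_divide_distrib[symmetric])
  then have "(1 - T) *\<^sub>R Fb + T *\<^sub>R (\<Sum>i\<in>I. (c i / T) *\<^sub>R e i) \<in> D"
    using convexD[OF assms(1,2)] \<open>T > 0\<close> assms(5) by (auto simp: T_def)
  moreover have "(1 - T) *\<^sub>R Fb + T *\<^sub>R (\<Sum>i\<in>I. (c i / T) *\<^sub>R e i) = Fb + (\<Sum>i\<in>I. c i *\<^sub>R (e i - Fb))"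
    using \<open>T > 0\<close> by (simp add: scaleR_sum_right scaleR_diff_right sum_subtractf T_def
        scaleR_sum_left[symmetric] algebra_simps)
  ultimately show ?thesis by simp
qed

lemma convex_basis_combination_mem:
  fixes D :: "'b::euclidean_space set"
  assumes D: "convex D" "Fb \<in> D" and S: "\<And>w. 0 \<le> S w" and E: "\<And>w. E w \<in> D"
    and r: "4 * r * (\<Sum>i\<in>Basis. S i + S (-i)) \<le> 1" and u: "norm u \<le> r"
  shows "Fb + (\<Sum>i\<in>Basis. ((r + u \<bullet> i) * S i) *\<^sub>R (E i - Fb) + (r * S (-i)) *\<^sub>R (E (-i) - Fb)) \<in> D"
proof -
  define X where "X = (\<Sum>i\<in>Basis. ((r + u \<bullet> i) * S i) *\<^sub>R (E i - Fb))"
  define Y where "Y = (\<Sum>i\<in>Basis. (r * S (-i)) *\<^sub>R (E (-i) - Fb))"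
  have ui: "\<bar>u \<bullet> i\<bar> \<le> r" if "i \<in> Basis" for i
    using Basis_le_norm[OF that, of u] u by simp
  then have "0 \<le> r" using abs_ge_zero order_trans nonempty_Basis by blast
  have "Fb + 2 *\<^sub>R X \<in> D"
    unfolding X_def scaleR_sum_right scaleR_scaleR
  proof (rule convex_subconvex_combination_mem[OF D finite_Basis])
    show "0 \<le> 2 * ((r + u \<bullet> i) * S i)" if "i \<in> Basis" for i
      using ui[OF that] S[of i] by (intro mult_nonneg_nonneg) auto
    have "2 * ((r + u \<bullet> i) * S i) \<le> 4 * r * (S i + S (-i))" if "i \<in> Basis" for i
    proof -
      have "(r + u \<bullet> i) * S i \<le> (2 * r) * S i" using ui[OF that] S[of i] by (intro mult_right_mono) auto
      moreover have "0 \<le> r * S (-i)" using \<open>0 \<le> r\<close> S[of "-i"] by simp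
      ultimately show ?thesis by (simp add: algebra_simps)
    qed
    then have "(\<Sum>i\<in>Basis. 2 * ((r + u \<bullet> i) * S i)) \<le> (\<Sum>i\<in>Basis. 4 * r * (S i + S (-i)))"
      by (rule sum_mono)
    then show "(\<Sum>i\<in>Basis. 2 * ((r + u \<bullet> i) * S i)) \<le> 1"
      using r by (simp add: sum_distrib_left)
  qed (use E in auto)
  moreover have "Fb + 2 *\<^sub>R Y \<in> D"
    unfolding Y_def scaleR_sum_right scaleR_scaleR
  proof (rule convex_subconvex_combination_mem[OF D finite_Basis])
    have "(\<Sum>i\<in>Basis. 2 * (r * S (-i))) \<le> (\<Sum>i\<in>Basis. 4 * r * (S i + S (-i)))"
      using \<open>0 \<le> r\<close> S by (intro sum_mono) (simp add: algebra_simps)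
    then show "(\<Sum>i\<in>Basis. 2 * (r * S (-i))) \<le> 1"
      using r by (simp add: sum_distrib_left)
  qed (use \<open>0 \<le> r\<close> S E in auto)
  ultimately have "(1/2) *\<^sub>R (Fb + 2 *\<^sub>R X) + (1/2) *\<^sub>R (Fb + 2 *\<^sub>R Y) \<in> D"
    by (intro convexD[OF D(1)]) auto
  moreover have "(1/2) *\<^sub>R (Fb + 2 *\<^sub>R X) + (1/2) *\<^sub>R (Fb + 2 *\<^sub>R Y) = Fb + (X + Y)"
    by (simp add: scaleR_add_right algebra_simps flip: scaleR_add_left)
  moreover have "X + Y = (\<Sum>i\<in>Basis. ((r + u \<bullet> i) * S i) *\<^sub>R (E i - Fb) + (r * S (-i)) *\<^sub>R (E (-i) - Fb))"
    by (simp add: X_def Y_def sum.distrib)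
  ultimately show ?thesis by simp
qed

text \<open>Decompose \<open>\<plusminus>e\<^sub>i = L h\<^sub>\<plusminus> - s\<^sub>\<plusminus> (d\<^sub>\<plusminus> - Fb)\<close> for each basis vector \<open>e\<^sub>i\<close>: the \<open>+e\<^sub>i\<close>
  decompositions define \<open>M\<close> and \<open>J\<close>, and adding both shows that \<open>L (h\<^sub>+ + h\<^sub>-)\<close> points into \<open>D\<close>.\<close>

lemma qualification_splitting:
  fixes L :: "'a::euclidean_space \<Rightarrow> 'b::euclidean_space"
  assumes L: "linear L" and D: "convex D" "Fb \<in> D"
    and qual: "\<forall>y\<in>normal_cone_cvx D Fb. adjoint L y = 0 \<longrightarrow> y = 0"
  obtains M :: "'b \<Rightarrow>\<^sub>L 'a" and J :: "'b \<Rightarrow>\<^sub>L 'b" and c r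
  where "0 < r" "\<And>w. L (M w) - J w = w" "\<And>u. norm u \<le> r \<Longrightarrow> Fb + L c + J u \<in> D"
proof -
  have "\<exists>h s d. 0 \<le> s \<and> d \<in> D \<and> w = L h - s *\<^sub>R (d - Fb)" for w
    using normal_cone_qualification_decomposition[OF assms] by blast
  then obtain H S E where S: "\<And>w. 0 \<le> S w" and E: "\<And>w. E w \<in> D"
    and HSE: "\<And>w. L (H w) - S w *\<^sub>R (E w - Fb) = w"
    by metis
  define g where "g i = S i *\<^sub>R (E i - Fb)" for i
  define M where "M y = (\<Sum>i\<in>Basis. (y \<bullet> i) *\<^sub>R H i)" for y
  define J where "J y = (\<Sum>i\<in>Basis. (y \<bullet> i) *\<^sub>R g i)" for y
  define r where "r = 1 / (4 * (\<Sum>i\<in>Basis. S i + S (-i)) + 4)"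
  define c where "c = r *\<^sub>R (\<Sum>i\<in>Basis. H i + H (-i))"
  have r: "0 < r" "4 * r * (\<Sum>i\<in>Basis. S i + S (-i)) \<le> 1"
  proof -
    have "0 \<le> (\<Sum>i\<in>Basis. S i + S (-i))" by (intro sum_nonneg add_nonneg_nonneg S)
    then show "0 < r" "4 * r * (\<Sum>i\<in>Basis. S i + S (-i)) \<le> 1" by (simp_all add: r_def)
  qed
  have "linear M" "linear J"
    unfolding M_def J_def by (auto intro!: linearI simp: inner_add_left scaleR_add_left sum.distrib
        scaleR_sum_right)
  then have bl: "bounded_linear M" "bounded_linear J" by (simp_all add: linear_conv_bounded_linear)
  have "L (M y) - J y = y" for y
  proof -
    have "L (M y) - J y = (\<Sum>i\<in>Basis. (y \<bullet> i) *\<^sub>R (L (H i) - S i *\<^sub>R (E i - Fb)))"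
      by (simp add: M_def J_def g_def linear_sum[OF L] linear_scale[OF L] sum_subtractf scaleR_diff_right)
    also have "\<dots> = y" by (simp add: HSE euclidean_representation)
    finally show ?thesis .
  qed
  moreover have "Fb + L c + J u \<in> D" if "norm u \<le> r" for u
  proof -
    have "L (H w) = w + g w" for w using HSE[of w] unfolding g_def by (metis diff_add_cancel add.commute)
    then have Lc: "L c = (\<Sum>i\<in>Basis. r *\<^sub>R (g i + g (-i)))"
      by (simp add: c_def linear_scale[OF L] linear_sum[OF L] linear_add[OF L] scaleR_sum_right)
    have "L c + J u = (\<Sum>i\<in>Basis. ((r + u \<bullet> i) * S i) *\<^sub>R (E i - Fb) + (r * S (-i)) *\<^sub>R (E (-i) - Fb))"
      unfolding Lc J_def sum.distrib[symmetric] by (intro sum.cong) (auto simp: g_def algebra_simps)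
    then show ?thesis
      using convex_basis_combination_mem[OF D S E r(2) that] by (simp add: add.assoc)
  qed
  ultimately show ?thesis
    using that[of r "Blinfun M" "Blinfun J" c] r bl by (simp add: bounded_linear_Blinfun_apply)
qed

section \<open>An implicit solution map\<close>

text \<open>Inverting \<open>augmented F M J\<close> near \<open>(xbar, F xbar, 0)\<close> solves \<open>F (z + M v) = a + J v\<close>
  for \<open>v\<close> as a function of \<open>(z, a)\<close>.\<close>

definition augmented :: "('a::real_normed_vector \<Rightarrow> 'b::real_normed_vector)
    \<Rightarrow> ('b \<Rightarrow>\<^sub>L 'a) \<Rightarrow> ('b \<Rightarrow>\<^sub>L 'b) \<Rightarrow> 'a \<times> 'b \<times> 'b \<Rightarrow> 'a \<times> 'b \<times> 'b" where
  "augmented f M J p =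
     (fst p, fst (snd p), f (fst p + M (snd (snd p))) - fst (snd p) - J (snd (snd p)))"

lemma bounded_linear_augmented:
  assumes "bounded_linear f"
  shows "bounded_linear (augmented f M J)"
  unfolding augmented_def[abs_def]
  by (intro bounded_linear_intros bounded_linear_compose[OF assms])

lemma augmented_has_derivative:
  fixes M :: "'b::real_normed_vector \<Rightarrow>\<^sub>L 'a::real_normed_vector" and J :: "'b \<Rightarrow>\<^sub>L 'b"
  assumes "(F has_derivative F') (at (fst p + M (snd (snd p))))"
  shows "(augmented F M J has_derivative augmented F' M J) (at p)"
proof -
  have "((\<lambda>q. fst q + M (snd (snd q))) has_derivative (\<lambda>h. fst h + M (snd (snd h)))) (at p)"
    by (intro bounded_linear_imp_has_derivative bounded_linear_intros)
  from has_derivative_compose[OF this assms]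
  show ?thesis unfolding augmented_def[abs_def] by (auto intro!: derivative_eq_intros)
qed

lemma continuous_on_Blinfun_augmented:
  fixes A :: "'s::topological_space \<Rightarrow> 'a::real_normed_vector \<Rightarrow>\<^sub>L 'b::real_normed_vector"
    and M :: "'b \<Rightarrow>\<^sub>L 'a" and J :: "'b \<Rightarrow>\<^sub>L 'b"
  assumes "continuous_on U A"
  shows "continuous_on U (\<lambda>p. Blinfun (augmented (A p) M J))"
proof -
  have "Blinfun (augmented (A p) M J) = Blinfun (augmented (\<lambda>_. 0) M J)
      + (Blinfun (\<lambda>w::'b. (0::'a, 0::'b, w)) o\<^sub>L A p o\<^sub>L Blinfun (\<lambda>h. fst h + M (snd (snd h))))" for p
    by (intro blinfun_eqI) (simp add: bounded_linear_Blinfun_apply bounded_linear_augmented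
        bounded_linear_intros blinfun.bounded_linear_right augmented_def blinfun.add_left)
  then show ?thesis using assms by (simp add: continuous_intros)
qed

lemma augmented_left_inverse:
  fixes L :: "'a::real_normed_vector \<Rightarrow>\<^sub>L 'b::real_normed_vector"
    and M :: "'b \<Rightarrow>\<^sub>L 'a" and J :: "'b \<Rightarrow>\<^sub>L 'b"
  assumes "\<And>w. L (M w) - J w = w"
  shows "Blinfun (\<lambda>k. (fst k, fst (snd k), snd (snd k) - L (fst k) + fst (snd k)))
      o\<^sub>L Blinfun (augmented L M J) = id_blinfun"
proof -
  have "bounded_linear (\<lambda>k::'a \<times> 'b \<times> 'b. (fst k, fst (snd k), snd (snd k) - L (fst k) + fst (snd k)))"
    by (intro bounded_linear_intros)
  then show ?thesis
    using assms by (intro blinfun_eqI) (simp add: bounded_linear_Blinfun_apply bounded_linear_augmented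
        blinfun.bounded_linear_right augmented_def blinfun.add_right algebra_simps)
qed

lemma augmented_local_inverse:
  fixes F :: "'a::euclidean_space \<Rightarrow> 'b::euclidean_space" and F' :: "'a \<Rightarrow> 'a \<Rightarrow>\<^sub>L 'b"
    and M :: "'b \<Rightarrow>\<^sub>L 'a" and J :: "'b \<Rightarrow>\<^sub>L 'b"
  assumes "open V" "xbar \<in> V"
    and F: "\<And>x. x \<in> V \<Longrightarrow> (F has_derivative F' x) (at x)" and "continuous_on V F'"
    and right_inverse: "\<And>w. F' xbar (M w) - J w = w"
  defines "p0 \<equiv> (xbar, F xbar, 0)"
  obtains U W G G' where "open U" "p0 \<in> U" "open W" "p0 \<in> W"
    "\<And>p. p \<in> U \<Longrightarrow> fst p + M (snd (snd p)) \<in> V"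
    "homeomorphism U W (augmented F M J) G"
    "\<And>y. y \<in> W \<Longrightarrow> (G has_derivative G' y) (at y)"
    "\<And>y k. y \<in> W \<Longrightarrow> augmented (F' (fst (G y) + M (snd (snd (G y))))) M J (G' y k) = k"
proof -
  define S where "S p = fst p + M (snd (snd p))" for p :: "'a \<times> 'b \<times> 'b"
  define U0 where "U0 = S -` V"
  define \<Psi>' where "\<Psi>' p = Blinfun (augmented (F' (S p)) M J)" for p
  have \<Psi>': "blinfun_apply (\<Psi>' p) = augmented (F' (S p)) M J" for p
    by (simp add: \<Psi>'_def bounded_linear_Blinfun_apply bounded_linear_augmented blinfun.bounded_linear_right)
  have "continuous_on UNIV S" unfolding S_def by (intro linear_continuous_on bounded_linear_intros)
  then have "open U0" "continuous_on U0 (\<lambda>p. F' (S p))"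
    using \<open>open V\<close> \<open>continuous_on V F'\<close> by (auto simp: U0_def open_vimage
        intro: continuous_on_compose2 continuous_on_subset)
  have cont: "continuous_on U0 \<Psi>'"
    unfolding \<Psi>'_def by (rule continuous_on_Blinfun_augmented) fact
  have der: "(augmented F M J has_derivative \<Psi>' p) (at p)" if "p \<in> U0" for p
    unfolding \<Psi>' using that F by (intro augmented_has_derivative) (simp add: U0_def S_def)
  have "p0 \<in> U0" using \<open>xbar \<in> V\<close> by (simp add: U0_def S_def p0_def)
  moreover have "Blinfun (\<lambda>k. (fst k, fst (snd k), snd (snd k) - F' xbar (fst k) + fst (snd k)))
      o\<^sub>L \<Psi>' p0 = id_blinfun"
    using augmented_left_inverse[OF right_inverse] by (simp add: \<Psi>'_def S_def p0_def)
  ultimately obtain U W G G' where UW: "open U" "U \<subseteq> U0" "p0 \<in> U" "open W"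
    "augmented F M J p0 \<in> W" "homeomorphism U W (augmented F M J) G"
    and G: "\<And>y. y \<in> W \<Longrightarrow> (G has_derivative (G' y)) (at y)"
    "\<And>y. y \<in> W \<Longrightarrow> G' y = inv (\<Psi>' (G y))" "\<And>y. y \<in> W \<Longrightarrow> bij (\<Psi>' (G y))"
    using inverse_function_theorem[OF \<open>open U0\<close> der cont] by blast
  have "augmented F M J p0 = p0" by (simp add: augmented_def p0_def)
  show ?thesis
  proof (rule that)
    show "fst p + M (snd (snd p)) \<in> V" if "p \<in> U" for p
      using UW(2) that by (auto simp: U0_def S_def)
    show "augmented (F' (fst (G y) + M (snd (snd (G y))))) M J (G' y k) = k" if "y \<in> W" for y k
    proof -
      have "\<Psi>' (G y) (G' y k) = k" using G(2,3)[OF that] by (simp add: bij_is_surj surj_f_inv_f)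
      then show ?thesis by (simp add: \<Psi>' S_def)
    qed
  qed (use UW G(1) \<open>augmented F M J p0 = p0\<close> in auto)
qed

locale implicit_solution =
  fixes F :: "'a::euclidean_space \<Rightarrow> 'b::euclidean_space" and F' :: "'a \<Rightarrow> 'a \<Rightarrow>\<^sub>L 'b"
    and V :: "'a set" and M :: "'b \<Rightarrow>\<^sub>L 'a" and J :: "'b \<Rightarrow>\<^sub>L 'b"
    and N :: "('a \<times> 'b) set" and \<sigma> :: "'a \<times> 'b \<Rightarrow> 'b" and \<sigma>' :: "'a \<times> 'b \<Rightarrow> 'a \<times> 'b \<Rightarrow> 'b"
  assumes open_domain: "open N"
    and solution_mem: "\<And>p. p \<in> N \<Longrightarrow> fst p + M (\<sigma> p) \<in> V"
    and solution_eq: "\<And>p. p \<in> N \<Longrightarrow> F (fst p + M (\<sigma> p)) = snd p + J (\<sigma> p)"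
    and solution_has_derivative: "\<And>p. p \<in> N \<Longrightarrow> (\<sigma> has_derivative \<sigma>' p) (at p)"
    and solution_derivative_eq:
      "\<And>p h. p \<in> N \<Longrightarrow> F' (fst p + M (\<sigma> p)) (fst h + M (\<sigma>' p h)) = snd h + J (\<sigma>' p h)"
    and solution_graph: "\<And>z. (z, F z) \<in> N \<Longrightarrow> \<sigma> (z, F z) = 0"

lemma implicit_solution_exists:
  fixes F :: "'a::euclidean_space \<Rightarrow> 'b::euclidean_space" and F' :: "'a \<Rightarrow> 'a \<Rightarrow>\<^sub>L 'b"
    and M :: "'b \<Rightarrow>\<^sub>L 'a" and J :: "'b \<Rightarrow>\<^sub>L 'b"
  assumes "open V" "xbar \<in> V"
    and "\<And>x. x \<in> V \<Longrightarrow> (F has_derivative F' x) (at x)" and "continuous_on V F'"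
    and "\<And>w. F' xbar (M w) - J w = w"
  obtains N \<sigma> \<sigma>' where "(xbar, F xbar) \<in> N" "implicit_solution F F' V M J N \<sigma> \<sigma>'"
proof -
  obtain U W G G' where "open U" "(xbar, F xbar, 0) \<in> U" "open W" "(xbar, F xbar, 0) \<in> W"
    and UV: "\<And>p. p \<in> U \<Longrightarrow> fst p + M (snd (snd p)) \<in> V"
    and hom: "homeomorphism U W (augmented F M J) G"
    and G: "\<And>y. y \<in> W \<Longrightarrow> (G has_derivative G' y) (at y)"
    and G': "\<And>y k. y \<in> W \<Longrightarrow> augmented (F' (fst (G y) + M (snd (snd (G y))))) M J (G' y k) = k"
    using augmented_local_inverse[OF assms] by blast
  define \<iota> where "\<iota> p = (fst p, snd p, 0 :: 'b)" for p :: "'a \<times> 'b"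
  define N where "N = \<iota> -` (U \<inter> W)"
  define \<sigma> where "\<sigma> p = snd (snd (G (\<iota> p)))" for p
  define \<sigma>' where "\<sigma>' p h = snd (snd (G' (\<iota> p) (\<iota> h)))" for p h
  have "bounded_linear \<iota>" unfolding \<iota>_def[abs_def] by (intro bounded_linear_intros)
  have G_\<iota>: "G (\<iota> p) = (fst p, snd p, \<sigma> p)" "G (\<iota> p) \<in> U"
    and eq: "F (fst p + M (\<sigma> p)) - snd p - J (\<sigma> p) = 0" if "p \<in> N" for p
  proof -
    have "\<iota> p \<in> W" using that by (simp add: N_def)
    then have "augmented F M J (G (\<iota> p)) = \<iota> p" "G (\<iota> p) \<in> U"
      using hom by (auto simp: homeomorphism_def)
    then show "G (\<iota> p) = (fst p, snd p, \<sigma> p)" "G (\<iota> p) \<in> U"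
      "F (fst p + M (\<sigma> p)) - snd p - J (\<sigma> p) = 0"
      by (auto simp: augmented_def \<iota>_def \<sigma>_def prod_eq_iff)
  qed
  show ?thesis
  proof (rule that)
    show "(xbar, F xbar) \<in> N"
      using \<open>(xbar, F xbar, 0) \<in> U\<close> \<open>(xbar, F xbar, 0) \<in> W\<close> by (simp add: N_def \<iota>_def)
    show "implicit_solution F F' V M J N \<sigma> \<sigma>'"
    proof
      show "open N"
        using \<open>open U\<close> \<open>open W\<close> \<open>bounded_linear \<iota>\<close>
        by (simp add: N_def open_Int open_vimage linear_continuous_on)
      show "fst p + M (\<sigma> p) \<in> V" if "p \<in> N" for p
        using UV[OF G_\<iota>(2)[OF that]] by (simp add: G_\<iota>(1)[OF that])
      show "F (fst p + M (\<sigma> p)) = snd p + J (\<sigma> p)" if "p \<in> N" for p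
        using eq[OF that] by (simp add: algebra_simps)
      show "(\<sigma> has_derivative \<sigma>' p) (at p)" if "p \<in> N" for p
        using that G[of "\<iota> p"] bounded_linear_imp_has_derivative[OF \<open>bounded_linear \<iota>\<close>]
        unfolding \<sigma>_def[abs_def] \<sigma>'_def N_def
        by (auto intro!: derivative_eq_intros intro: has_derivative_compose)
      show "F' (fst p + M (\<sigma> p)) (fst h + M (\<sigma>' p h)) = snd h + J (\<sigma>' p h)" if "p \<in> N" for p h
      proof -
        have "augmented (F' (fst p + M (\<sigma> p))) M J (G' (\<iota> p) (\<iota> h)) = \<iota> h"
          using G'[of "\<iota> p" "\<iota> h"] that by (simp add: N_def G_\<iota>)
        then show ?thesis by (auto simp: augmented_def \<iota>_def \<sigma>'_def prod_eq_iff algebra_simps)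
      qed
      show "\<sigma> (z, F z) = 0" if "(z, F z) \<in> N" for z
      proof -
        have "\<iota> (z, F z) \<in> U" "augmented F M J (\<iota> (z, F z)) = \<iota> (z, F z)"
          using that by (auto simp: N_def \<iota>_def augmented_def)
        then have "G (\<iota> (z, F z)) = \<iota> (z, F z)" using hom by (metis homeomorphism_apply1)
        then show ?thesis by (simp add: \<sigma>_def \<iota>_def)
      qed
    qed
  qed
qed

lemma norm_le_bump_of_vanishing_endpoints:
  fixes f :: "real \<Rightarrow> 'a::real_normed_vector"
  assumes f': "\<And>s. s \<in> {0..1} \<Longrightarrow> (f has_vector_derivative f' s) (at s)"
    and B: "\<And>s. s \<in> {0..1} \<Longrightarrow> norm (f' s) \<le> B"
    and "f 0 = 0" "f 1 = 0" and t: "t \<in> {0..1}"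
  shows "norm (f t) \<le> 2 * B * t * (1 - t)"
proof -
  have lipschitz: "norm (f t - f s) \<le> B * norm (t - s)" if "s \<in> {0..1}" for s
  proof (rule differentiable_bound[where f'="\<lambda>s h. h *\<^sub>R f' s"])
    show "(f has_derivative (\<lambda>h. h *\<^sub>R f' s)) (at s within {0..1})" if "s \<in> {0..1}" for s
      using f'[OF that] by (auto simp: has_vector_derivative_def intro: has_derivative_at_withinI)
    show "onorm (\<lambda>h. h *\<^sub>R f' s) \<le> B" if "s \<in> {0..1}" for s
      using B[OF that] by (simp add: onorm_scaleR_left[OF bounded_linear_ident] onorm_id)
  qed (use that t in auto)
  have "norm (f t) \<le> B * t" "norm (f t) \<le> B * (1 - t)"
    using lipschitz[of 0] lipschitz[of 1] t \<open>f 0 = 0\<close> \<open>f 1 = 0\<close> by auto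
  have "0 \<le> B" using B[OF t] norm_ge_zero order_trans by blast
  show ?thesis
  proof (cases "t \<le> 1/2")
    case True
    have "0 \<le> B * t * (1 - 2 * t)" using True t \<open>0 \<le> B\<close> by simp
    moreover have "2 * B * t * (1 - t) = B * t + B * t * (1 - 2 * t)" by (simp add: algebra_simps)
    ultimately show ?thesis using \<open>norm (f t) \<le> B * t\<close> by linarith
  next
    case False
    have "0 \<le> B * (1 - t) * (2 * t - 1)" using False t \<open>0 \<le> B\<close> by simp
    moreover have "2 * B * t * (1 - t) = B * (1 - t) + B * (1 - t) * (2 * t - 1)" by (simp add: algebra_simps)
    ultimately show ?thesis using \<open>norm (f t) \<le> B * (1 - t)\<close> by linarith
  qed
qed

lemma norm_le_of_perturbed_right_inverse:
  fixes A L :: "'a::real_normed_vector \<Rightarrow>\<^sub>L 'b::real_normed_vector"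
    and M :: "'b \<Rightarrow>\<^sub>L 'a" and J :: "'b \<Rightarrow>\<^sub>L 'b"
  assumes "\<And>w. L (M w) - J w = w" and "norm (A - L) * norm M \<le> 1/2"
  shows "norm w \<le> 2 * norm (A (M w) - J w)"
proof -
  have "norm ((A - L) (M w)) \<le> norm (A - L) * norm (M w)" by (rule norm_blinfun)
  also have "\<dots> \<le> norm (A - L) * (norm M * norm w)" by (intro mult_left_mono norm_blinfun norm_ge_zero)
  also have "\<dots> \<le> norm w / 2" using mult_right_mono[OF assms(2) norm_ge_zero[of w]] by (simp add: mult.assoc)
  finally have "norm ((A - L) (M w)) \<le> norm w / 2" .
  moreover have "w = (A (M w) - J w) - (A - L) (M w)"
    using assms(1)[of w] by (simp add: blinfun.diff_left algebra_simps)
  then have "norm w \<le> norm (A (M w) - J w) + norm ((A - L) (M w))"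
    by (metis norm_triangle_ineq4)
  ultimately show ?thesis by linarith
qed

lemma continuous_on_solution_of_linear_eq:
  fixes T :: "'s::metric_space \<Rightarrow> 'b::real_normed_vector \<Rightarrow>\<^sub>L 'c::real_normed_vector"
  assumes T: "continuous_on U T" and R: "continuous_on U R"
    and eq: "\<And>t. t \<in> U \<Longrightarrow> T t (w t) = R t"
    and bound: "\<And>t h. t \<in> U \<Longrightarrow> norm h \<le> K * norm (T t h)" and "0 \<le> K"
  shows "continuous_on U w"
  unfolding continuous_on_def
proof
  fix s assume s: "s \<in> U"
  define g where "g t = K * (norm (R t - R s) + norm (T t - T s) * norm (w s))" for t
  have "norm (w t - w s) \<le> g t" if t: "t \<in> U" for t
  proof -
    have "T t (w t - w s) = (R t - R s) - (T t - T s) (w s)"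
      using eq[OF t] eq[OF s] by (simp add: blinfun.diff_right blinfun.diff_left)
    moreover have "norm ((R t - R s) - (T t - T s) (w s)) \<le> norm (R t - R s) + norm (T t - T s) * norm (w s)"
      by (meson add_left_mono norm_blinfun norm_triangle_ineq4 order_trans)
    ultimately show ?thesis
      using bound[OF t, of "w t - w s"] \<open>0 \<le> K\<close> unfolding g_def
      by (metis mult_left_mono order_trans)
  qed
  then have "\<forall>\<^sub>F t in at s within U. norm (w t - w s) \<le> g t"
    by (auto simp: eventually_at_filter)
  moreover have "(g \<longlongrightarrow> K * (0 + 0 * norm (w s))) (at s within U)"
    using T R s unfolding g_def continuous_on_def
    by (intro tendsto_intros tendsto_norm_zero) (auto simp: LIM_zero)
  ultimately have "((\<lambda>t. w t - w s) \<longlongrightarrow> 0) (at s within U)"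
    by (auto intro: Lim_null_comparison)
  then show "(w \<longlongrightarrow> w s) (at s within U)" by (simp add: LIM_zero_iff)
qed

lemma convex_mem_of_splitting:
  assumes "convex D" "b \<in> D" and splitting: "\<And>u. norm u \<le> r \<Longrightarrow> p + J u \<in> D" and "linear J"
    and "0 \<le> \<theta>" "\<theta> \<le> 1" "norm w \<le> \<theta> * r"
  shows "(1 - \<theta>) *\<^sub>R b + \<theta> *\<^sub>R p + J w \<in> D"
proof (cases "\<theta> = 0")
  case True
  then show ?thesis using assms by (simp add: linear_0)
next
  case False
  then have "norm (w /\<^sub>R \<theta>) \<le> r" using assms by (simp add: field_simps)
  then have "(1 - \<theta>) *\<^sub>R b + \<theta> *\<^sub>R (p + J (w /\<^sub>R \<theta>)) \<in> D"
    using assms splitting by (intro convexD) auto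
  then show ?thesis using False \<open>linear J\<close> by (simp add: linear_scale scaleR_add_right add.assoc)
qed

lemma eventually_at_right_0_mult_less:
  fixes a b :: real
  assumes "0 < a"
  shows "\<forall>\<^sub>F s in at_right 0. s * b < a"
proof (rule order_tendstoD(2))
  show "((\<lambda>s. s * b) \<longlongrightarrow> 0 * b) (at_right 0)" by (intro tendsto_intros)
qed (use assms in simp)

lemma exists_pos_of_eventually_at_right_0:
  fixes P :: "real \<Rightarrow> bool"
  assumes "\<forall>\<^sub>F s in at_right 0. P s"
  obtains s where "0 < s" "P s"
proof -
  obtain b where "0 < b" "\<And>s. 0 < s \<Longrightarrow> s < b \<Longrightarrow> P s"
    using assms by (auto simp: eventually_at_right_field)
  then show ?thesis using that[of "b / 2"] by simp
qed

section \<open>The curve between two nearby points\<close>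

locale amenable_splitting = implicit_solution F F' V M J N \<sigma> \<sigma>'
  for F :: "'a::euclidean_space \<Rightarrow> 'b::euclidean_space" and F' V M J N \<sigma> \<sigma>' +
  fixes C :: "'a set" and D :: "'b set" and xbar :: 'a and c :: 'a and rB :: real
  assumes base_mem: "(xbar, F xbar) \<in> N"
    and open_V: "open V" and xbar_mem: "xbar \<in> C \<inter> V"
    and F_has_derivative: "\<And>y. y \<in> V \<Longrightarrow> (F has_derivative F' y) (at y)"
    and continuous_F': "continuous_on V F'"
    and convex_D: "convex D" and C_eq: "C \<inter> V = {y \<in> V. F y \<in> D}"
    and right_inverse: "\<And>w. F' xbar (M w) - J w = w"
    and rB_pos: "0 < rB"
    and splitting: "\<And>u. norm u \<le> rB \<Longrightarrow> F xbar + F' xbar c + J u \<in> D"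

text \<open>Within \<open>\<delta>\<close> of \<open>(xbar, F xbar)\<close> the solution map is defined and \<open>F'\<close> is \<open>\<eta>\<close>-close to
  \<open>F' xbar\<close> at the solutions; \<open>\<tau>\<close> is chosen so that \<open>\<tau> * norm (x' - x)\<close> bounds the velocity
  of the correction \<open>\<sigma> \<circ> track\<close>.\<close>

locale curve_construction = amenable_splitting F F' V M J N \<sigma> \<sigma>' C D xbar c rB
  for F :: "'a::euclidean_space \<Rightarrow> 'b::euclidean_space" and F' V M J N \<sigma> \<sigma>' C D xbar c rB +
  fixes \<eta> r \<delta> \<tau> :: real and x x' :: 'a
  assumes near_base: "\<And>p. dist p (xbar, F xbar) < \<delta> \<Longrightarrow> p \<in> N \<and> norm (F' (fst p + M (\<sigma> p)) - F' xbar) \<le> \<eta>"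
    and endpoints_mem: "x \<in> C \<inter> V" "x' \<in> C \<inter> V"
    and endpoints_near: "dist x xbar < r" "dist x' xbar < r" "dist (F x) (F xbar) < r" "dist (F x') (F xbar) < r"
    and linearization: "norm (F x' - F x - F' xbar (x' - x)) \<le> \<eta> * norm (x' - x)"
    and eta_M: "\<eta> * norm M \<le> 1/2"
    and r_le: "r \<le> 2"
    and r_delta: "r * (4 + norm c + norm (F' xbar c)) \<le> 2 * \<delta>"
    and tau: "\<eta> * (6 + 2 * norm c) + r * (norm (F' xbar) + 2) \<le> \<tau>"
    and tau_rB: "2 * \<tau> \<le> rB"
begin

definition "\<rho> = norm (x' - x)"
definition "\<theta> t = \<rho> * t * (1 - t)"
definition "\<theta>' t = \<rho> * (1 - 2 * t)"
definition "chord t = (1 - t) *\<^sub>R F x + t *\<^sub>R F x'"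
definition "target = F xbar + F' xbar c"
definition "track t = (x + t *\<^sub>R (x' - x) + \<theta> t *\<^sub>R c, (1 - \<theta> t) *\<^sub>R chord t + \<theta> t *\<^sub>R target)"
definition "track' t = (x' - x + \<theta>' t *\<^sub>R c, (1 - \<theta> t) *\<^sub>R (F x' - F x) + \<theta>' t *\<^sub>R (target - chord t))"
definition "curve t = fst (track t) + M (\<sigma> (track t))"
definition "curve' t = fst (track' t) + M (\<sigma>' (track t) (track' t))"
definition "near_times = {t. dist (track t) (xbar, F xbar) < \<delta>}"

lemma parameter_bounds: "0 < r" "0 < \<delta>" "0 \<le> \<eta>" "0 \<le> \<tau>" "\<rho> < 2 * r"
proof -
  show "0 < r" using endpoints_near(1) zero_le_dist order_le_less_trans by blast
  then show "0 < \<delta>" using r_delta by (smt (verit) mult_pos_pos norm_ge_zero)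
  then show "0 \<le> \<eta>" using near_base[of "(xbar, F xbar)"] by (smt (verit) dist_self norm_ge_zero)
  then show "0 \<le> \<tau>" using tau \<open>0 < r\<close> by (smt (verit) mult_nonneg_nonneg norm_ge_zero)
  show "\<rho> < 2 * r"
    using endpoints_near(1,2) dist_triangle2[of x x' xbar] by (simp add: \<rho>_def dist_norm norm_minus_commute)
qed

lemma bump_bounds:
  assumes "t \<in> {0..1}"
  shows "0 \<le> \<theta> t" "\<theta> t \<le> r / 2" "\<theta> t \<le> 1" "\<bar>\<theta>' t\<bar> \<le> \<rho>"
proof -
  have "0 \<le> (t - 1/2)\<^sup>2" by simp
  then have "t * (1 - t) \<le> 1/4" by (simp add: power2_eq_square algebra_simps)
  moreover have "0 \<le> t * (1 - t)" "\<bar>1 - 2 * t\<bar> \<le> 1" using assms by auto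
  moreover have "0 \<le> \<rho>" by (simp add: \<rho>_def)
  ultimately have "\<theta> t \<le> \<rho> / 4" "0 \<le> \<theta> t" "\<bar>\<theta>' t\<bar> \<le> \<rho>"
    using mult_left_mono[of "t * (1 - t)" "1/4" \<rho>] mult_left_mono[of "\<bar>1 - 2 * t\<bar>" 1 \<rho>]
    by (auto simp: \<theta>_def \<theta>'_def abs_mult mult.assoc)
  then show "0 \<le> \<theta> t" "\<theta> t \<le> r / 2" "\<theta> t \<le> 1" "\<bar>\<theta>' t\<bar> \<le> \<rho>"
    using parameter_bounds(5) r_le by auto
qed

lemma chord_mem:
  assumes "t \<in> {0..1}"
  shows "chord t \<in> D" "dist (chord t) (F xbar) < r"
proof -
  have "F x \<in> D" "F x' \<in> D" using endpoints_mem C_eq by auto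
  then show "chord t \<in> D" using assms convexD[OF convex_D] by (simp add: chord_def)
  have "F x \<in> ball (F xbar) r" "F x' \<in> ball (F xbar) r"
    using endpoints_near by (auto simp: dist_commute)
  then have "chord t \<in> ball (F xbar) r"
    unfolding chord_def using assms by (intro convexD[OF convex_ball]) auto
  then show "dist (chord t) (F xbar) < r" by (simp add: dist_commute)
qed

lemma mem_near_times:
  assumes "t \<in> {0..1}"
  shows "t \<in> near_times"
proof -
  have "x \<in> ball xbar r" "x' \<in> ball xbar r" using endpoints_near by (auto simp: dist_commute)
  then have "(1 - t) *\<^sub>R x + t *\<^sub>R x' \<in> ball xbar r" using assms by (intro convexD[OF convex_ball]) auto
  then have "norm (fst (track t) - xbar) < r + \<theta> t * norm c"
    using bump_bounds(1)[OF assms] norm_triangle_ineq[of "(1 - t) *\<^sub>R x + t *\<^sub>R x' - xbar" "\<theta> t *\<^sub>R c"]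
    by (simp add: track_def dist_norm norm_minus_commute algebra_simps)
  also have "\<dots> \<le> r + r / 2 * norm c"
    using mult_right_mono[OF bump_bounds(2)[OF assms] norm_ge_zero] by simp
  finally have fst: "norm (fst (track t) - xbar) < r + r / 2 * norm c" .
  have "snd (track t) - F xbar = (1 - \<theta> t) *\<^sub>R (chord t - F xbar) + \<theta> t *\<^sub>R F' xbar c"
    by (simp add: track_def target_def algebra_simps)
  then have "norm (snd (track t) - F xbar) \<le> (1 - \<theta> t) * norm (chord t - F xbar) + \<theta> t * norm (F' xbar c)"
    using bump_bounds(1,3)[OF assms] norm_triangle_ineq by (metis abs_of_nonneg diff_ge_0_iff_ge norm_scaleR)
  moreover have "(1 - \<theta> t) * norm (chord t - F xbar) \<le> norm (chord t - F xbar)"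
    using bump_bounds(1,3)[OF assms] by (intro mult_left_le_one_le) auto
  moreover have "\<theta> t * norm (F' xbar c) \<le> r / 2 * norm (F' xbar c)"
    using mult_right_mono[OF bump_bounds(2)[OF assms] norm_ge_zero] by simp
  ultimately have snd: "norm (snd (track t) - F xbar) < r + r / 2 * norm (F' xbar c)"
    using chord_mem(2)[OF assms] by (simp add: dist_norm)
  have "dist (track t) (xbar, F xbar) = norm (fst (track t) - xbar, snd (track t) - F xbar)"
    by (cases "track t") (simp add: dist_norm)
  then have "dist (track t) (xbar, F xbar) \<le> norm (fst (track t) - xbar) + norm (snd (track t) - F xbar)"
    by (metis norm_Pair_le)
  then show ?thesis using fst snd r_delta by (simp add: near_times_def algebra_simps)
qed

lemma track_has_derivative: "(track has_vector_derivative track' t) (at t)"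
proof -
  have \<theta>: "(\<theta> has_real_derivative \<theta>' t) (at t)"
    unfolding \<theta>_def[abs_def] \<theta>'_def by (auto intro!: derivative_eq_intros simp: algebra_simps)
  have chord: "(chord has_vector_derivative F x' - F x) (at t)"
    unfolding chord_def[abs_def] by (auto intro!: derivative_eq_intros simp: algebra_simps)
  show ?thesis
    unfolding track_def[abs_def] track'_def
    by (auto intro!: derivative_eq_intros \<theta> chord simp: algebra_simps)
qed

lemma open_near_times: "open near_times"
proof -
  have "continuous_on UNIV track"
    using track_has_derivative by (meson continuous_at_imp_continuous_on has_vector_derivative_continuous)
  then show ?thesis
    using open_vimage[OF open_ball] by (simp add: near_times_def vimage_def dist_commute)
qed

lemma curve_on_near_times:
  assumes "t \<in> near_times"
  shows "track t \<in> N" "norm (F' (curve t) - F' xbar) \<le> \<eta>" "curve t \<in> V"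
    "F (curve t) = snd (track t) + J (\<sigma> (track t))"
  using near_base[of "track t"] assms solution_mem solution_eq by (auto simp: near_times_def curve_def)

lemma curve_has_derivative:
  assumes "t \<in> near_times"
  shows "((\<lambda>s. \<sigma> (track s)) has_vector_derivative \<sigma>' (track t) (track' t)) (at t)"
    and "(curve has_vector_derivative curve' t) (at t)"
proof -
  have "(\<sigma> has_derivative \<sigma>' (track t)) (at (track t))"
    using solution_has_derivative curve_on_near_times(1)[OF assms] by blast
  then show \<sigma>: "((\<lambda>s. \<sigma> (track s)) has_vector_derivative \<sigma>' (track t) (track' t)) (at t)"
    using track_has_derivative[of t] unfolding has_vector_derivative_def
    by (auto dest: has_derivative_compose simp: linear_scale[OF has_derivative_linear])
  show "(curve has_vector_derivative curve' t) (at t)"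
    unfolding curve_def[abs_def] curve'_def
    by (intro has_vector_derivative_add bounded_linear.has_vector_derivative[OF bounded_linear_fst]
        bounded_linear.has_vector_derivative[OF blinfun.bounded_linear_right] track_has_derivative \<sigma>)
qed

lemma linearized_eq:
  assumes "t \<in> near_times"
  shows "F' (curve t) (M (\<sigma>' (track t) (track' t))) - J (\<sigma>' (track t) (track' t))
      = snd (track' t) - F' (curve t) (fst (track' t))"
  using solution_derivative_eq[OF curve_on_near_times(1)[OF assms], of "track' t"]
  by (simp add: curve_def blinfun.add_right algebra_simps)

lemma norm_le_linearized:
  assumes "t \<in> near_times"
  shows "norm w \<le> 2 * norm (F' (curve t) (M w) - J w)"
proof (rule norm_le_of_perturbed_right_inverse[OF right_inverse])
  show "norm (F' (curve t) - F' xbar) * norm M \<le> 1/2"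
    using curve_on_near_times(2)[OF assms] eta_M by (smt (verit) mult_right_mono norm_ge_zero)
qed

lemma residual_eq:
  fixes A :: "'a \<Rightarrow>\<^sub>L 'b"
  shows "snd (track' t) - A (fst (track' t)) = (F x' - F x - F' xbar (x' - x)) - (A - F' xbar) (x' - x)
      - \<theta> t *\<^sub>R (F x' - F x) + \<theta>' t *\<^sub>R ((F xbar - chord t) - (A - F' xbar) c)"
proof -
  have "A (fst (track' t)) = A (x' - x) + \<theta>' t *\<^sub>R A c"
    by (simp add: track'_def blinfun.add_right blinfun.scaleR_right)
  then show ?thesis by (simp add: track'_def target_def blinfun.diff_left algebra_simps)
qed

lemma residual_bound:
  fixes A :: "'a \<Rightarrow>\<^sub>L 'b"
  assumes t: "t \<in> {0..1}" and A: "norm (A - F' xbar) \<le> \<eta>"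
  shows "2 * norm (snd (track' t) - A (fst (track' t))) \<le> \<tau> * \<rho>"
proof -
  define L where "L = F' xbar"
  define \<Delta>F where "\<Delta>F = F x' - F x"
  have lin: "norm (\<Delta>F - L (x' - x)) \<le> \<eta> * \<rho>" using linearization by (simp add: \<Delta>F_def L_def \<rho>_def)
  have A_lin: "norm ((A - L) v) \<le> \<eta> * norm v" for v
    using A norm_blinfun[of "A - L" v] by (simp add: L_def) (meson mult_right_mono norm_ge_zero order_trans)
  have "norm (\<theta> t *\<^sub>R \<Delta>F) \<le> r / 2 * ((norm L + \<eta>) * \<rho>)"
  proof -
    have "norm \<Delta>F \<le> norm (L (x' - x)) + \<eta> * \<rho>" using lin norm_triangle_sub[of \<Delta>F "L (x' - x)"] by linarith
    also have "\<dots> \<le> (norm L + \<eta>) * \<rho>" using norm_blinfun[of L "x' - x"] by (simp add: \<rho>_def algebra_simps)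
    finally have "\<theta> t * norm \<Delta>F \<le> r / 2 * ((norm L + \<eta>) * \<rho>)"
      by (intro mult_mono) (use bump_bounds(1,2)[OF t] parameter_bounds(1) in auto)
    then show ?thesis using bump_bounds(1)[OF t] by simp
  qed
  moreover have "norm (\<theta>' t *\<^sub>R ((F xbar - chord t) - (A - L) c)) \<le> \<rho> * (r + \<eta> * norm c)"
  proof -
    have "norm ((F xbar - chord t) - (A - L) c) \<le> r + \<eta> * norm c"
      using chord_mem(2)[OF t] A_lin[of c] norm_triangle_ineq4[of "F xbar - chord t" "(A - L) c"]
      by (simp add: dist_norm norm_minus_commute)
    then have "\<bar>\<theta>' t\<bar> * norm ((F xbar - chord t) - (A - L) c) \<le> \<rho> * (r + \<eta> * norm c)"
      by (intro mult_mono) (use bump_bounds(4)[OF t] in \<open>auto simp: \<rho>_def\<close>)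
    then show ?thesis by simp
  qed
  ultimately have "norm (snd (track' t) - A (fst (track' t)))
      \<le> \<eta> * \<rho> + \<eta> * \<rho> + r / 2 * ((norm L + \<eta>) * \<rho>) + \<rho> * (r + \<eta> * norm c)"
    using lin A_lin[of "x' - x"] unfolding residual_eq L_def[symmetric] \<Delta>F_def[symmetric] \<rho>_def
    by (smt (verit) norm_triangle_ineq norm_triangle_ineq4)
  also have "\<dots> \<le> \<rho> * (\<eta> * (6 + 2 * norm c) + r * (norm L + 2)) / 2"
  proof -
    have "r * \<eta> \<le> 2 * \<eta>" using r_le parameter_bounds(3) by (simp add: mult_right_mono)
    from mult_left_mono[OF this, of \<rho>] show ?thesis by (simp add: \<rho>_def algebra_simps)
  qed
  also have "\<dots> \<le> \<rho> * \<tau> / 2"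
    using tau by (simp add: L_def \<rho>_def mult_left_mono)
  finally show ?thesis by (simp add: mult.commute)
qed

lemma solution_derivative_bound:
  assumes "t \<in> {0..1}"
  shows "norm (\<sigma>' (track t) (track' t)) \<le> \<tau> * \<rho>"
proof -
  have "t \<in> near_times" using mem_near_times[OF assms] .
  then have "norm (\<sigma>' (track t) (track' t)) \<le> 2 * norm (snd (track' t) - F' (curve t) (fst (track' t)))"
    using norm_le_linearized[of t "\<sigma>' (track t) (track' t)"] linearized_eq[of t] by simp
  also have "\<dots> \<le> \<tau> * \<rho>"
    using residual_bound[OF assms curve_on_near_times(2)[OF \<open>t \<in> near_times\<close>]] .
  finally show ?thesis .
qed

lemma track_endpoints: "track 0 = (x, F x)" "track 1 = (x', F x')"
  by (simp_all add: track_def \<theta>_def chord_def)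

lemma curve_endpoints: "\<sigma> (track 0) = 0" "\<sigma> (track 1) = 0" "curve 0 = x" "curve 1 = x'"
proof -
  have "track 0 \<in> N" "track 1 \<in> N" using curve_on_near_times(1) mem_near_times by auto
  then show "\<sigma> (track 0) = 0" "\<sigma> (track 1) = 0"
    using solution_graph by (simp_all add: track_endpoints)
  then show "curve 0 = x" "curve 1 = x'" by (simp_all add: curve_def track_endpoints)
qed

lemma solution_bound:
  assumes "t \<in> {0..1}"
  shows "norm (\<sigma> (track t)) \<le> \<theta> t * rB"
proof -
  have "norm (\<sigma> (track t)) \<le> 2 * (\<tau> * \<rho>) * t * (1 - t)"
    using curve_has_derivative(1) mem_near_times solution_derivative_bound curve_endpoints(1,2) assms
    by (intro norm_le_bump_of_vanishing_endpoints[where f="\<lambda>s. \<sigma> (track s)"]) auto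
  also have "\<dots> = (2 * \<tau>) * \<theta> t" by (simp add: \<theta>_def)
  also have "\<dots> \<le> \<theta> t * rB" using mult_left_mono[OF tau_rB bump_bounds(1)[OF assms]] by (simp add: mult_ac)
  finally show ?thesis .
qed

lemma curve_mem:
  assumes "t \<in> {0..1}"
  shows "curve t \<in> C"
proof -
  have "t \<in> near_times" using mem_near_times[OF assms] .
  have "F (curve t) = (1 - \<theta> t) *\<^sub>R chord t + \<theta> t *\<^sub>R target + J (\<sigma> (track t))"
    using curve_on_near_times(4)[OF \<open>t \<in> near_times\<close>] by (simp add: track_def)
  also have "\<dots> \<in> D"
    using bump_bounds[OF assms] chord_mem(1)[OF assms] solution_bound[OF assms] splitting
    by (intro convex_mem_of_splitting[OF convex_D])
      (auto simp: target_def bounded_linear.linear[OF blinfun.bounded_linear_right] mult.commute)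
  finally show ?thesis using curve_on_near_times(3)[OF \<open>t \<in> near_times\<close>] C_eq by auto
qed

lemma continuous_on_curve': "continuous_on near_times curve'"
proof -
  have "continuous_on near_times curve"
    using curve_has_derivative(2)
    by (meson continuous_at_imp_continuous_on has_vector_derivative_continuous)
  then have F'_curve: "continuous_on near_times (\<lambda>t. F' (curve t))"
    using curve_on_near_times(3) by (intro continuous_on_compose2[OF continuous_F']) auto
  have "continuous_on near_times track'"
    unfolding track'_def \<theta>_def \<theta>'_def chord_def by (intro continuous_intros)
  have "continuous_on near_times (\<lambda>t. \<sigma>' (track t) (track' t))"
  proof (rule continuous_on_solution_of_linear_eq)
    show "continuous_on near_times (\<lambda>t. (F' (curve t) o\<^sub>L M) - J)"
      using F'_curve by (intro continuous_intros)
    show "continuous_on near_times (\<lambda>t. snd (track' t) - F' (curve t) (fst (track' t)))"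
      using F'_curve \<open>continuous_on near_times track'\<close> by (intro continuous_intros)
  qed (use linearized_eq norm_le_linearized in \<open>auto simp: blinfun.diff_left\<close>)
  then show ?thesis
    unfolding curve'_def using \<open>continuous_on near_times track'\<close> by (intro continuous_intros)
qed

lemma curve_derivative_deviation:
  assumes "t \<in> {0..1}"
  shows "norm (vector_derivative curve (at t within {0..1}) - (x' - x)) \<le> (norm c + norm M * \<tau>) * \<rho>"
proof -
  have "(curve has_vector_derivative curve' t) (at t within {0..1})"
    using curve_has_derivative(2)[OF mem_near_times[OF assms]] by (rule has_vector_derivative_at_within)
  then have "vector_derivative curve (at t within {0..1}) = curve' t"
    using assms by (intro vector_derivative_within_closed_interval) auto
  moreover have "norm (curve' t - (x' - x)) \<le> \<rho> * norm c + norm M * (\<tau> * \<rho>)"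
    using norm_triangle_ineq[of "\<theta>' t *\<^sub>R c" "M (\<sigma>' (track t) (track' t))"]
      norm_blinfun[of M "\<sigma>' (track t) (track' t)"] bump_bounds(4)[OF assms]
      solution_derivative_bound[OF assms]
    by (simp add: curve'_def track'_def) (smt (verit) mult_left_mono mult_right_mono norm_ge_zero)
  ultimately show ?thesis by (simp add: algebra_simps)
qed

lemma smooth_curve_segment_curve: "smooth_curve_segment C 0 1 curve"
  unfolding smooth_curve_segment_def
  using curve_mem open_near_times mem_near_times curve_has_derivative(2) continuous_on_curve'
  by (intro conjI exI[of _ near_times] exI[of _ curve] exI[of _ curve']) auto

end

context amenable_splitting
begin

lemma splitting_scaled:
  assumes "0 < \<kappa>" "\<kappa> \<le> 1"
  shows "amenable_splitting F F' V M J N \<sigma> \<sigma>' C D xbar (\<kappa> *\<^sub>R c) (\<kappa> * rB)"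
proof -
  have "F xbar + F' xbar (\<kappa> *\<^sub>R c) + J u \<in> D" if "norm u \<le> \<kappa> * rB" for u
  proof -
    have "norm (u /\<^sub>R \<kappa>) \<le> rB" using that assms by (simp add: field_simps)
    then have "(1 - \<kappa>) *\<^sub>R F xbar + \<kappa> *\<^sub>R (F xbar + F' xbar c + J (u /\<^sub>R \<kappa>)) \<in> D"
      using xbar_mem C_eq assms splitting by (intro convexD[OF convex_D]) auto
    then show ?thesis
      using assms by (simp add: blinfun.scaleR_right blinfun.add_right scaleR_add_right algebra_simps)
  qed
  then show ?thesis
    using assms rB_pos base_mem open_V xbar_mem F_has_derivative continuous_F' convex_D C_eq right_inverse
    by (intro amenable_splitting.intro amenable_splitting_axioms.intro implicit_solution_axioms)
      (auto intro: mult_pos_pos)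
qed

lemma near_base_exists:
  assumes "0 < \<eta>"
  obtains \<delta> where "0 < \<delta>"
    "\<And>p. dist p (xbar, F xbar) < \<delta> \<Longrightarrow> p \<in> N \<and> norm (F' (fst p + M (\<sigma> p)) - F' xbar) \<le> \<eta>"
proof -
  have "\<sigma> (xbar, F xbar) = 0" using solution_graph base_mem by blast
  have "isCont \<sigma> (xbar, F xbar)"
    using solution_has_derivative[OF base_mem] by (rule has_derivative_continuous)
  have "isCont F' xbar"
    using continuous_F' open_V xbar_mem by (simp add: continuous_on_eq_continuous_at)
  have "isCont (\<lambda>p. fst p + M (\<sigma> p)) (xbar, F xbar)"
    using \<open>isCont \<sigma> (xbar, F xbar)\<close> by (intro continuous_intros)
  then have "isCont (\<lambda>p. F' (fst p + M (\<sigma> p))) (xbar, F xbar)"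
    by (rule isCont_o2) (use \<open>isCont F' xbar\<close> \<open>\<sigma> (xbar, F xbar) = 0\<close> in simp)
  then obtain \<delta>1 where "0 < \<delta>1" and \<delta>1: "\<And>p. dist p (xbar, F xbar) < \<delta>1 \<Longrightarrow>
      dist (F' (fst p + M (\<sigma> p))) (F' xbar) < \<eta>"
    using \<open>0 < \<eta>\<close> \<open>\<sigma> (xbar, F xbar) = 0\<close> unfolding continuous_at_eps_delta by fastforce
  obtain \<delta>2 where "0 < \<delta>2" "ball (xbar, F xbar) \<delta>2 \<subseteq> N"
    using open_domain base_mem open_contains_ball by blast
  show ?thesis
  proof (rule that[of "min \<delta>1 \<delta>2"])
    show "0 < min \<delta>1 \<delta>2" using \<open>0 < \<delta>1\<close> \<open>0 < \<delta>2\<close> by simp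
    fix p assume "dist p (xbar, F xbar) < min \<delta>1 \<delta>2"
    then show "p \<in> N \<and> norm (F' (fst p + M (\<sigma> p)) - F' xbar) \<le> \<eta>"
      using \<delta>1[of p] \<open>ball (xbar, F xbar) \<delta>2 \<subseteq> N\<close> by (auto simp: dist_norm norm_minus_commute)
  qed
qed

lemma linearization_near:
  assumes "0 < \<eta>"
  obtains r0 where "0 < r0"
    "\<And>y y'. y \<in> ball xbar r0 \<Longrightarrow> y' \<in> ball xbar r0 \<Longrightarrow>
      norm (F y' - F y - F' xbar (y' - y)) \<le> \<eta> * norm (y' - y)"
proof -
  obtain r1 where "0 < r1" and r1: "\<And>y. y \<in> V \<Longrightarrow> dist y xbar < r1 \<Longrightarrow> dist (F' y) (F' xbar) < \<eta>"
    using continuous_F' xbar_mem assms unfolding continuous_on_iff by blast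
  obtain r2 where "0 < r2" "ball xbar r2 \<subseteq> V" using open_V xbar_mem open_contains_ball by blast
  define r0 where "r0 = min r1 r2"
  have sub: "ball xbar r0 \<subseteq> V" using \<open>ball xbar r2 \<subseteq> V\<close> by (auto simp: r0_def)
  have "norm (F y' - F y - F' xbar (y' - y)) \<le> norm (y' - y) * \<eta>"
    if y: "y \<in> ball xbar r0" "y' \<in> ball xbar r0" for y y'
  proof (rule differentiable_bound_linearization[where S="ball xbar r0" and f'="\<lambda>y. blinfun_apply (F' y)"])
    show "y + t *\<^sub>R (y' - y) \<in> ball xbar r0" if "t \<in> {0..1}" for t
      using that y convexD[OF convex_ball, of y xbar r0 y' "1 - t" t] by (simp add: algebra_simps)
    show "(F has_derivative F' z) (at z within ball xbar r0)" if "z \<in> ball xbar r0" for z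
      using sub that by (auto intro!: has_derivative_at_withinI F_has_derivative)
    show "onorm (blinfun_apply (F' z) - blinfun_apply (F' xbar)) \<le> \<eta>" if "z \<in> ball xbar r0" for z
    proof -
      have "dist (F' z) (F' xbar) < \<eta>" using r1[of z] sub that by (auto simp: r0_def dist_commute)
      then show ?thesis by (simp add: dist_norm norm_blinfun.rep_eq minus_blinfun.rep_eq fun_diff_def)
    qed
  qed (use \<open>0 < r1\<close> \<open>0 < r2\<close> in \<open>auto simp: r0_def\<close>)
  then show ?thesis
    using that[of r0] \<open>0 < r1\<close> \<open>0 < r2\<close> by (auto simp: r0_def mult.commute)
qed

lemma curves_near_base:
  assumes "0 < \<eta>" "\<eta> * norm M \<le> 1/2" "\<eta> * (6 + 2 * norm c) < \<tau> / 2" "2 * \<tau> \<le> rB"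
  obtains W where "open W" "xbar \<in> W"
    "\<And>x x'. x \<in> C \<inter> W \<Longrightarrow> x' \<in> C \<inter> W \<Longrightarrow> \<exists>\<gamma>. smooth_curve_segment C 0 1 \<gamma> \<and> \<gamma> 0 = x \<and> \<gamma> 1 = x' \<and>
      (\<forall>t\<in>{0..1}. norm (vector_derivative \<gamma> (at t within {0..1}) - (x' - x))
        \<le> (norm c + norm M * \<tau>) * norm (x' - x))"
proof -
  obtain \<delta> where "0 < \<delta>"
    and \<delta>: "\<And>p. dist p (xbar, F xbar) < \<delta> \<Longrightarrow> p \<in> N \<and> norm (F' (fst p + M (\<sigma> p)) - F' xbar) \<le> \<eta>"
    using near_base_exists[OF \<open>0 < \<eta>\<close>] by blast
  obtain r0 where "0 < r0"
    and r0: "\<And>y y'. y \<in> ball xbar r0 \<Longrightarrow> y' \<in> ball xbar r0 \<Longrightarrow>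
      norm (F y' - F y - F' xbar (y' - y)) \<le> \<eta> * norm (y' - y)"
    using linearization_near[OF \<open>0 < \<eta>\<close>] by blast
  have "0 \<le> \<eta> * (6 + 2 * norm c)" using assms(1) by simp
  then have "0 < \<tau>" using assms(3) by linarith
  have "\<forall>\<^sub>F r in at_right 0. r * 1 < r0 \<and> r * 1 < 2 \<and> r * (4 + norm c + norm (F' xbar c)) < 2 * \<delta>
      \<and> r * (norm (F' xbar) + 2) < \<tau> / 2"
    using \<open>0 < r0\<close> \<open>0 < \<delta>\<close> \<open>0 < \<tau>\<close> by (intro eventually_conj eventually_at_right_0_mult_less) auto
  then obtain r where "0 < r" "r < r0" "r < 2" and r_delta: "r * (4 + norm c + norm (F' xbar c)) < 2 * \<delta>"
    and r_tau: "r * (norm (F' xbar) + 2) < \<tau> / 2"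
    by (auto elim: exists_pos_of_eventually_at_right_0)
  define W where "W = ball xbar r \<inter> (F -` ball (F xbar) r \<inter> V)"
  have "continuous_on V F"
    using F_has_derivative by (meson continuous_at_imp_continuous_on has_derivative_continuous)
  then have "open (F -` ball (F xbar) r \<inter> V)"
    using continuous_on_open_vimage[OF open_V] by blast
  then have "open W" by (simp add: W_def open_Int)
  moreover have "xbar \<in> W" using xbar_mem \<open>0 < r\<close> by (simp add: W_def)
  ultimately show ?thesis
  proof (rule that)
    fix x x' assume x: "x \<in> C \<inter> W" and x': "x' \<in> C \<inter> W"
    interpret curve_construction F F' V M J N \<sigma> \<sigma>' C D xbar c rB \<eta> r \<delta> \<tau> x x'
    proof
      show "x \<in> C \<inter> V" "x' \<in> C \<inter> V" using x x' by (auto simp: W_def)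
      show "dist x xbar < r" "dist x' xbar < r" "dist (F x) (F xbar) < r" "dist (F x') (F xbar) < r"
        using x x' by (auto simp: W_def dist_commute)
      show "norm (F x' - F x - F' xbar (x' - x)) \<le> \<eta> * norm (x' - x)"
        using x x' \<open>r < r0\<close> by (intro r0) (auto simp: W_def)
      show "\<eta> * (6 + 2 * norm c) + r * (norm (F' xbar) + 2) \<le> \<tau>" using assms(3) r_tau by linarith
      show "dist p (xbar, F xbar) < \<delta> \<Longrightarrow> p \<in> N \<and> norm (F' (fst p + M (\<sigma> p)) - F' xbar) \<le> \<eta>" for p
        by (rule \<delta>)
      show "r * (4 + norm c + norm (F' xbar c)) \<le> 2 * \<delta>" using r_delta by simp
    qed (use assms \<open>r < 2\<close> in simp_all)
    show "\<exists>\<gamma>. smooth_curve_segment C 0 1 \<gamma> \<and> \<gamma> 0 = x \<and> \<gamma> 1 = x' \<and>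
      (\<forall>t\<in>{0..1}. norm (vector_derivative \<gamma> (at t within {0..1}) - (x' - x))
        \<le> (norm c + norm M * \<tau>) * norm (x' - x))"
      using smooth_curve_segment_curve curve_endpoints(3,4) curve_derivative_deviation
      by (intro exI[of _ curve]) (simp add: \<rho>_def)
  qed
qed

lemma smoothly_approx_convex: "smoothly_approx_convex C xbar"
  unfolding smoothly_approx_convex_def
proof (intro allI impI)
  fix \<epsilon> :: real assume "0 < \<epsilon>"
  have "\<forall>\<^sub>F \<kappa> in at_right 0. \<kappa> * 1 < 1 \<and> \<kappa> * norm c < \<epsilon> / 2"
    using \<open>0 < \<epsilon>\<close> by (intro eventually_conj eventually_at_right_0_mult_less) auto
  then obtain \<kappa> where "0 < \<kappa>" "\<kappa> < 1" "\<kappa> * norm c < \<epsilon> / 2"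
    by (auto elim: exists_pos_of_eventually_at_right_0)
  interpret scaled: amenable_splitting F F' V M J N \<sigma> \<sigma>' C D xbar "\<kappa> *\<^sub>R c" "\<kappa> * rB"
    using splitting_scaled \<open>0 < \<kappa>\<close> \<open>\<kappa> < 1\<close> by simp
  have "\<forall>\<^sub>F \<tau> in at_right 0. \<tau> * 2 < \<kappa> * rB \<and> \<tau> * norm M < \<epsilon> / 2"
    using \<open>0 < \<epsilon>\<close> \<open>0 < \<kappa>\<close> rB_pos by (intro eventually_conj eventually_at_right_0_mult_less) auto
  then obtain \<tau> where "0 < \<tau>" "\<tau> * 2 < \<kappa> * rB" "\<tau> * norm M < \<epsilon> / 2"
    by (auto elim: exists_pos_of_eventually_at_right_0)
  have "\<forall>\<^sub>F \<eta> in at_right 0. \<eta> * norm M < 1/2 \<and> \<eta> * (6 + 2 * norm (\<kappa> *\<^sub>R c)) < \<tau> / 2"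
    using \<open>0 < \<tau>\<close> by (intro eventually_conj eventually_at_right_0_mult_less) auto
  then obtain \<eta> where "0 < \<eta>" "\<eta> * norm M < 1/2" "\<eta> * (6 + 2 * norm (\<kappa> *\<^sub>R c)) < \<tau> / 2"
    by (auto elim: exists_pos_of_eventually_at_right_0)
  then obtain W where W: "open W" "xbar \<in> W"
    "\<And>x x'. x \<in> C \<inter> W \<Longrightarrow> x' \<in> C \<inter> W \<Longrightarrow> \<exists>\<gamma>. smooth_curve_segment C 0 1 \<gamma> \<and> \<gamma> 0 = x \<and> \<gamma> 1 = x' \<and>
      (\<forall>t\<in>{0..1}. norm (vector_derivative \<gamma> (at t within {0..1}) - (x' - x))
        \<le> (norm (\<kappa> *\<^sub>R c) + norm M * \<tau>) * norm (x' - x))"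
    using scaled.curves_near_base[of \<eta> \<tau>] \<open>\<tau> * 2 < \<kappa> * rB\<close> by auto
  have bound: "(norm (\<kappa> *\<^sub>R c) + norm M * \<tau>) * norm (x' - x) \<le> \<epsilon> * norm (x' - x)" for x x' :: 'a
    using \<open>0 < \<kappa>\<close> \<open>\<kappa> * norm c < \<epsilon> / 2\<close> \<open>\<tau> * norm M < \<epsilon> / 2\<close>
    by (intro mult_right_mono) (auto simp: mult.commute)
  show "\<exists>W. open W \<and> xbar \<in> W \<and> (\<forall>x\<in>C \<inter> W. \<forall>x'\<in>C \<inter> W. \<exists>\<gamma>. smooth_curve_segment C 0 1 \<gamma> \<and>
      \<gamma> 0 = x \<and> \<gamma> 1 = x' \<and> (\<forall>t\<in>{0..1}. norm (vector_derivative \<gamma> (at t within {0..1}) - (x' - x))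
        \<le> \<epsilon> * norm (x' - x)))"
  proof (intro exI[of _ W] conjI ballI)
    fix x x' assume "x \<in> C \<inter> W" "x' \<in> C \<inter> W"
    then obtain \<gamma> where "smooth_curve_segment C 0 1 \<gamma>" "\<gamma> 0 = x" "\<gamma> 1 = x'"
      and dev: "\<And>t. t \<in> {0..1} \<Longrightarrow> norm (vector_derivative \<gamma> (at t within {0..1}) - (x' - x))
        \<le> (norm (\<kappa> *\<^sub>R c) + norm M * \<tau>) * norm (x' - x)"
      using W(3) by blast
    then show "\<exists>\<gamma>. smooth_curve_segment C 0 1 \<gamma> \<and> \<gamma> 0 = x \<and> \<gamma> 1 = x' \<and>
      (\<forall>t\<in>{0..1}. norm (vector_derivative \<gamma> (at t within {0..1}) - (x' - x)) \<le> \<epsilon> * norm (x' - x))"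
      using order_trans[OF dev bound] by blast
  qed (use W in auto)
qed

end

theorem theorem3p14:
  fixes C :: "'a::euclidean_space set" and xbar :: 'a
    and V :: "'a set" and F :: "'a \<Rightarrow> 'b::euclidean_space" and D :: "'b set"
  assumes "xbar \<in> C"
    and "amenable_via C xbar V F D"
  shows "smoothly_approx_convex C xbar"
proof -
  obtain F' :: "'a \<Rightarrow> 'a \<Rightarrow>\<^sub>L 'b" where "open V" "xbar \<in> V" and F: "\<forall>x\<in>V. (F has_derivative F' x) (at x)"
    and "continuous_on V F'" "convex D" and C_eq: "C \<inter> V = {x\<in>V. F x \<in> D}"
    and qual: "\<forall>y\<in>normal_cone_cvx D (F xbar). adjoint (F' xbar) y = 0 \<longrightarrow> y = 0"
    using assms(2) unfolding amenable_via_def by blast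
  have "F xbar \<in> D" using assms(1) \<open>xbar \<in> V\<close> C_eq by blast
  obtain M :: "'b \<Rightarrow>\<^sub>L 'a" and J :: "'b \<Rightarrow>\<^sub>L 'b" and c r
    where "0 < r" and right_inverse: "\<And>w. F' xbar (M w) - J w = w"
    and "\<And>u. norm u \<le> r \<Longrightarrow> F xbar + F' xbar c + J u \<in> D"
    by (rule qualification_splitting[OF blinfun.bounded_linear_right[THEN bounded_linear.linear]
        \<open>convex D\<close> \<open>F xbar \<in> D\<close> qual]) blast
  have F': "\<And>x. x \<in> V \<Longrightarrow> (F has_derivative F' x) (at x)" using F by blast
  obtain N \<sigma> \<sigma>' where "(xbar, F xbar) \<in> N" "implicit_solution F F' V M J N \<sigma> \<sigma>'"
    by (rule implicit_solution_exists[OF \<open>open V\<close> \<open>xbar \<in> V\<close> F' \<open>continuous_on V F'\<close> right_inverse])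
  then interpret amenable_splitting F F' V M J N \<sigma> \<sigma>' C D xbar c r
    using assms(1) \<open>F xbar \<in> D\<close> \<open>open V\<close> \<open>xbar \<in> V\<close> F' \<open>continuous_on V F'\<close> \<open>convex D\<close> C_eq right_inverse \<open>0 < r\<close>
      \<open>\<And>u. norm u \<le> r \<Longrightarrow> F xbar + F' xbar c + J u \<in> D\<close>
    by (intro amenable_splitting.intro amenable_splitting_axioms.intro) simp_all
  show ?thesis by (rule smoothly_approx_convex)
qed

end
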